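(* Let $D$ denote the set of variable network games $(v,\rho)\in\mathbb V^N\times\mathbb P^N$ such that $v$ is component additive. Then: (i) the Expected Position Value $\Psi^p$ is an allocation rule on the class of variable network games which, on $D$, satisfies component balance and the balanced link contributions property; and (ii) if $\Psi\colon\mathbb V^N\times\mathbb P^N\to\mathbb R^N$ is any allocation rule on the class of variable network games satisfying component balance and the balanced link contributions property for all $(v,\rho)\in D$, then $\Psi(v,\rho)=\Psi^p(v,\rho)$ for all $(v,\rho)\in D$. That is, $\Psi^p$ is the unique allocation rule on the class of component additive variable network games that satisfies component balance and the balanced link contributions property.
   Context: $N=\{1,\dots,n\}$ is a finite player set. A link is an unordered pair $ij=\{i,j\}$ of distinct players; $g_N$ is the set of all links; a network is any $g\subseteq g_N$; $\mathbb G^N$ is the set of all networks. For $g\in\mathbb G^N$: $N_i(g)=\{j\ne i: ij\in g\}$, $L_i(g)=\{ij\in g\}$ (links of $i$ in $g$), $N(g)=\bigcup_i N_i(g)$, and $N_0(g)=N\setminus N(g)$ (isolated players). $g+ij=g\cup\{ij\}$, $g-ij=g\setminus\{ij\}$. A component of $g$ is a nonempty subnetwork $h\subseteq g$ that is connected (any two players of $N(h)$ are joined by a path in $h$) and maximal (if $i\in N(h)$ and $ij\in g$ then $ij\in h$); $C(g)$ is the set of components of $g$. A network formation probability distribution is a map $\rho\colon\mathbb G^N\to[0,1]$ with $\sum_g\rho(g)=1$; $\mathbb P^N$ is the set of these. $\mathbb G(\rho)=\{g:\rho(g)>0\}$, and the extent is $g(\rho)=\bigcup_{g\in\mathbb G(\rho)}g$.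 For a network $g$, the restriction $\rho_g\in\mathbb P^N$ is $\rho_g(h)=\sum_{h'\subseteq g_N\setminus g}\rho(h\cup h')$ if $h\subseteq g$ and $\rho_g(h)=0$ otherwise. For a link $ij$, $\rho^{-ij}=\rho_{g_N-ij}$. A network game is $v\colon\mathbb G^N\to\mathbb R$ with $v(\varnothing)=0$; $\mathbb V^N$ is the set of these. $v$ is component additive if $v(g)=\sum_{h\in C(g)}v(h)$ for all $g$. A variable network game is a pair $(v,\rho)\in\mathbb V^N\times\mathbb P^N$. An allocation rule on the class of variable network games is a map $\Psi\colon\mathbb V^N\times\mathbb P^N\to\mathbb R^N$ with $\Psi_i(v,\rho)=0$ for every $i\in N_0(g(\rho))$. It is component balanced (on $(v,\rho)$ with $v$ component additive) if for every $h\in C(g(\rho))$: $\sum_{i\in N(h)}\Psi_i(v,\rho)=\sum_{g\in\mathbb G(\rho)}\rho(g)\,v(g\cap h)$. It satisfies the balanced link contributions property if for all players $i\neq j$: $\sum_{jk\in L_j(g(\rho))}[\Psi_i(v,\rho)-\Psi_i(v,\rho^{-jk})]=\sum_{ik\in L_i(g(\rho))}[\Psi_j(v,\rho)-\Psi_j(v,\rho^{-ik})]$. The Position Value for network games is $Y^p_i(v,g)=\tfrac12\sum_{ij\in g}\sum_{h\subseteq g-ij}\frac{\#h!\,(\#g-\#h-1)!}{\#g!}\,(v(h+ij)-v(h))$. The Expected Position Value is $\Psi^p(v,\rho)=\sum_{g\in\mathbb G^N}\rho(g)\,Y^p(v,g)$. *)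

theory Defs
  imports Main Complex_Main
begin

text \<open>Players are the elements of a finite type 'a (the player set N is UNIV).
A link is an unordered pair {i,j} of distinct players; a network is a set of links.\<close>

type_synonym 'a network = "'a set set"
type_synonym 'a game = "'a network \<Rightarrow> real"
type_synonym 'a pdist = "'a network \<Rightarrow> real"
type_synonym 'a rule = "'a game \<Rightarrow> 'a pdist \<Rightarrow> 'a \<Rightarrow> real"

definition complete_net :: "'a network" where
  "complete_net = {{i, j} | i j. i \<noteq> j}"

definition networks :: "'a network set" where
  "networks = Pow complete_net"

definition nbrs :: "'a network \<Rightarrow> 'a \<Rightarrow> 'a set" where
  "nbrs g i = {j. j \<noteq> i \<and> {i, j} \<in> g}"

definition links_of :: "'a network \<Rightarrow> 'a \<Rightarrow> 'a network" where
  "links_of g i = {l \<in> g. i \<in> l}"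

definition players :: "'a network \<Rightarrow> 'a set" where
  "players g = (\<Union>i. nbrs g i)"

definition isolated :: "'a network \<Rightarrow> 'a set" where
  "isolated g = UNIV - players g"

definition net_connected :: "'a network \<Rightarrow> bool" where
  "net_connected h \<longleftrightarrow>
     (\<forall>i\<in>players h. \<forall>j\<in>players h. (\<lambda>x y. {x, y} \<in> h)\<^sup>*\<^sup>* i j)"

definition components :: "'a network \<Rightarrow> 'a network set" where
  "components g = {h. h \<noteq> {} \<and> h \<subseteq> g \<and> net_connected h \<and>
      (\<forall>i\<in>players h. \<forall>j. {i, j} \<in> g \<longrightarrow> {i, j} \<in> h)}"

definition games :: "'a game set" where
  "games = {v. v {} = 0}"

definition comp_additive :: "'a game \<Rightarrow> bool" where
  "comp_additive v \<longleftrightarrow> (\<forall>g\<in>networks. v g = (\<Sum>h\<in>components g. v h))"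

definition pdists :: "'a pdist set" where
  "pdists = {\<rho>. (\<forall>g. 0 \<le> \<rho> g \<and> \<rho> g \<le> 1) \<and> (\<forall>g. g \<notin> networks \<longrightarrow> \<rho> g = 0)
                 \<and> (\<Sum>g\<in>networks. \<rho> g) = 1}"

definition support :: "'a pdist \<Rightarrow> 'a network set" where
  "support \<rho> = {g \<in> networks. \<rho> g > 0}"

definition extent :: "'a pdist \<Rightarrow> 'a network" where
  "extent \<rho> = \<Union>(support \<rho>)"

definition restrict_dist :: "'a pdist \<Rightarrow> 'a network \<Rightarrow> 'a pdist" where
  "restrict_dist \<rho> g h =
     (if h \<subseteq> g then (\<Sum>h'\<in>Pow (complete_net - g). \<rho> (h \<union> h')) else 0)"

definition remove_link :: "'a pdist \<Rightarrow> 'a set \<Rightarrow> 'a pdist" where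
  "remove_link \<rho> l = restrict_dist \<rho> (complete_net - {l})"

definition position_value :: "'a game \<Rightarrow> 'a network \<Rightarrow> 'a \<Rightarrow> real" where
  "position_value v g i = 1/2 * (\<Sum>l\<in>links_of g i. \<Sum>h\<in>Pow (g - {l}).
      (fact (card h) * fact (card g - card h - 1) / fact (card g)) * (v (insert l h) - v h))"

definition expected_position_value :: "'a rule" where
  "expected_position_value v \<rho> i = (\<Sum>g\<in>networks. \<rho> g * position_value v g i)"

definition allocation_rule :: "'a rule \<Rightarrow> bool" where
  "allocation_rule \<Psi> \<longleftrightarrow> (\<forall>v\<in>games. \<forall>\<rho>\<in>pdists. \<forall>i\<in>isolated (extent \<rho>). \<Psi> v \<rho> i = 0)"

definition component_balanced :: "'a rule \<Rightarrow> 'a game \<Rightarrow> 'a pdist \<Rightarrow> bool" where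
  "component_balanced \<Psi> v \<rho> \<longleftrightarrow>
     (\<forall>h\<in>components (extent \<rho>).
        (\<Sum>i\<in>players h. \<Psi> v \<rho> i) = (\<Sum>g\<in>support \<rho>. \<rho> g * v (g \<inter> h)))"

definition balanced_link_contributions :: "'a rule \<Rightarrow> 'a game \<Rightarrow> 'a pdist \<Rightarrow> bool" where
  "balanced_link_contributions \<Psi> v \<rho> \<longleftrightarrow>
     (\<forall>i j. i \<noteq> j \<longrightarrow>
        (\<Sum>l\<in>links_of (extent \<rho>) j. \<Psi> v \<rho> i - \<Psi> v (remove_link \<rho> l) i) =
        (\<Sum>l\<in>links_of (extent \<rho>) i. \<Psi> v \<rho> j - \<Psi> v (remove_link \<rho> l) j))"

definition D_class :: "('a game \<times> 'a pdist) set" where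
  "D_class = {(v, \<rho>). v \<in> games \<and> \<rho> \<in> pdists \<and> comp_additive v}"

end

theory Submission
  imports Defs
begin

(* Y^p(v, g) gives each player half of the Shapley value, in the game v played by the
   links of g, of each of its links.  Efficiency of that Shapley value and component
   additivity give component balance network by network, and the balanced contributions
   property of the Shapley value, read on links, gives balanced link contributions.  Both
   pass to the expectation because rho^-l is the image of rho under g |-> g - l.
   Uniqueness is by induction on the size of the extent: if two rules with both properties
   agree on every rho^-l, their difference d satisfies |L_j| d_i = |L_i| d_j, so d is
   proportional to the number of links, and component balance forces the factor to be 0. *)

definition shapley_weight :: "nat \<Rightarrow> nat \<Rightarrow> real" where
  "shapley_weight n s = fact s * fact (n - s - 1) / fact n"

definition link_shapley :: "('b set \<Rightarrow> real) \<Rightarrow> 'b set \<Rightarrow> 'b \<Rightarrow> real" where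
  "link_shapley f g l =
     (\<Sum>h\<in>Pow (g - {l}). shapley_weight (card g) (card h) * (f (insert l h) - f h))"

lemma position_value_eq_link_shapley:
  "position_value v g i = 1/2 * (\<Sum>l\<in>links_of g i. link_shapley v g l)"
  unfolding position_value_def link_shapley_def shapley_weight_def by simp

lemma link_shapley_cong:
  assumes "l \<in> g" "\<And>S. S \<subseteq> g \<Longrightarrow> f S = f' S"
  shows "link_shapley f g l = link_shapley f' g l"
proof -
  have "f (insert l S) = f' (insert l S) \<and> f S = f' S" if "S \<subseteq> g - {l}" for S
  proof -
    have "insert l S \<subseteq> g" "S \<subseteq> g"
      using that assms(1) by auto
    then show ?thesis
      using assms(2) by blast
  qed
  then show ?thesis
    unfolding link_shapley_def by (intro sum.cong) auto
qed

lemma link_shapley_add: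
  "link_shapley (\<lambda>S. f S + f' S) g l = link_shapley f g l + link_shapley f' g l"
  unfolding link_shapley_def by (simp add: sum.distrib[symmetric] algebra_simps)

lemma link_shapley_null_player:
  assumes "\<And>S. f (insert l S) = f S"
  shows "link_shapley f g l = 0"
  unfolding link_shapley_def using assms by simp

lemma shapley_weight_telescope:
  assumes "t \<le> n"
  shows "real t * shapley_weight n (t - 1) - real (n - t) * shapley_weight n t
       = (if t = n then 1 else 0) - (if t = 0 then 1 else 0)"
proof -
  obtain r where "n = t + r"
    using assms le_iff_add by blast
  then show ?thesis
    by (cases t; cases r) (simp_all add: shapley_weight_def)
qed

lemma sum_Pow_remove_insert:
  fixes c :: "nat \<Rightarrow> real"
  assumes g: "finite g"
  shows "(\<Sum>l\<in>g. \<Sum>h\<in>Pow (g - {l}). c (card h) * f (insert l h))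
       = (\<Sum>T\<in>Pow g. real (card T) * c (card T - 1) * f T)"
proof -
  have "(\<Sum>h\<in>Pow (g - {l}). c (card h) * f (insert l h))
      = (\<Sum>T\<in>{T \<in> Pow g. l \<in> T}. c (card T - 1) * f T)" if "l \<in> g" for l
    by (rule sum.reindex_bij_witness[where i = "\<lambda>T. T - {l}" and j = "insert l"])
      (use that g in \<open>auto simp: card_insert_if finite_subset\<close>)
  then have "(\<Sum>l\<in>g. \<Sum>h\<in>Pow (g - {l}). c (card h) * f (insert l h))
      = (\<Sum>l\<in>g. \<Sum>T\<in>{T \<in> Pow g. l \<in> T}. c (card T - 1) * f T)"
    by (rule sum.cong[OF refl])
  also have "\<dots> = (\<Sum>T\<in>Pow g. \<Sum>l\<in>{l \<in> g. l \<in> T}. c (card T - 1) * f T)"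
    by (rule sum.swap_restrict) (use g in auto)
  also have "\<dots> = (\<Sum>T\<in>Pow g. real (card T) * c (card T - 1) * f T)"
  proof (rule sum.cong[OF refl])
    fix T assume "T \<in> Pow g"
    then have "{l \<in> g. l \<in> T} = T"
      by auto
    then show "(\<Sum>l\<in>{l \<in> g. l \<in> T}. c (card T - 1) * f T) = real (card T) * c (card T - 1) * f T"
      by simp
  qed
  finally show ?thesis .
qed

lemma sum_Pow_remove:
  fixes c :: "nat \<Rightarrow> real"
  assumes g: "finite g"
  shows "(\<Sum>l\<in>g. \<Sum>h\<in>Pow (g - {l}). c (card h) * f h)
       = (\<Sum>T\<in>Pow g. real (card g - card T) * c (card T) * f T)"
proof -
  have "(\<Sum>l\<in>g. \<Sum>h\<in>Pow (g - {l}). c (card h) * f h)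
      = (\<Sum>l\<in>g. \<Sum>T\<in>{T \<in> Pow g. l \<notin> T}. c (card T) * f T)"
    by (intro sum.cong) auto
  also have "\<dots> = (\<Sum>T\<in>Pow g. \<Sum>l\<in>{l \<in> g. l \<notin> T}. c (card T) * f T)"
    by (rule sum.swap_restrict) (use g in auto)
  also have "\<dots> = (\<Sum>T\<in>Pow g. real (card g - card T) * c (card T) * f T)"
  proof (rule sum.cong[OF refl])
    fix T assume "T \<in> Pow g"
    moreover have "{l \<in> g. l \<notin> T} = g - T"
      by auto
    ultimately show "(\<Sum>l\<in>{l \<in> g. l \<notin> T}. c (card T) * f T) = real (card g - card T) * c (card T) * f T"
      using g by (simp add: card_Diff_subset finite_subset)
  qed
  finally show ?thesis .
qed

lemma link_shapley_efficient:
  assumes g: "finite g"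
  shows "(\<Sum>l\<in>g. link_shapley f g l) = f g - f {}"
proof -
  let ?w = "shapley_weight (card g)"
  have "(\<Sum>l\<in>g. link_shapley f g l)
      = (\<Sum>T\<in>Pow g. (real (card T) * ?w (card T - 1) - real (card g - card T) * ?w (card T)) * f T)"
    unfolding link_shapley_def
    by (simp add: right_diff_distrib left_diff_distrib sum_subtractf
        sum_Pow_remove_insert[OF g] sum_Pow_remove[OF g])
  also have "\<dots> = (\<Sum>T\<in>Pow g. (if T = g then f T else 0) - (if T = {} then f T else 0))"
  proof (rule sum.cong[OF refl])
    fix T assume "T \<in> Pow g"
    then have "card T \<le> card g" "card T = card g \<longleftrightarrow> T = g" "card T = 0 \<longleftrightarrow> T = {}"
      using g card_subset_eq[OF g] by (auto intro: card_mono dest: finite_subset)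
    then show "(real (card T) * ?w (card T - 1) - real (card g - card T) * ?w (card T)) * f T
        = (if T = g then f T else 0) - (if T = {} then f T else 0)"
      using shapley_weight_telescope[of "card T" "card g"] by simp
  qed
  also have "\<dots> = f g - f {}"
    using g by (simp add: sum_subtractf)
  finally show ?thesis .
qed

lemma shapley_weight_pascal:
  assumes "s + 2 \<le> n"
  shows "shapley_weight (n - 1) s = shapley_weight n s + shapley_weight n (Suc s)"
proof -
  obtain r where n: "n = Suc (Suc (s + r))"
    using assms by (metis add_2_eq_Suc' add.commute le_Suc_ex add_Suc_right)
  have "shapley_weight n s + shapley_weight n (Suc s)
      = fact s * fact r * ((real r + 1) + (real s + 1)) / fact n"
    by (simp add: n shapley_weight_def add_divide_distrib algebra_simps)
  also have "\<dots> = shapley_weight (n - 1) s"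
    by (simp add: n shapley_weight_def ac_simps)
  finally show ?thesis ..
qed

(* The right-hand side is symmetric in l and l'. *)
lemma link_shapley_remove_other_link:
  assumes g: "finite g" and l: "l \<in> g" "l' \<in> g" "l \<noteq> l'"
  shows "link_shapley f g l - link_shapley f (g - {l'}) l
       = (\<Sum>S\<in>Pow (g - {l, l'}). shapley_weight (card g) (Suc (card S)) *
            (f (insert l (insert l' S)) - f (insert l' S) - f (insert l S) + f S))"
proof -
  define K where "K = g - {l, l'}"
  define w where "w = shapley_weight (card g)"
  define D where "D S = f (insert l S) - f S" for S
  have K: "finite K" "l \<notin> K" "l' \<notin> K" "g - {l} = insert l' K" "g - {l'} - {l} = K"
    using g l by (auto simp: K_def)
  have "card {l, l'} \<le> card g"
    using g l by (intro card_mono) auto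
  then have card_g: "card g = card K + 2"
    using g l by (simp add: K_def card_Diff_subset)
  have "link_shapley f g l = (\<Sum>S\<in>Pow K. w (card S) * D S) + (\<Sum>S\<in>insert l' ` Pow K. w (card S) * D S)"
    unfolding link_shapley_def w_def D_def K(4) Pow_insert
    by (rule sum.union_disjoint) (use K in auto)
  also have "(\<Sum>S\<in>insert l' ` Pow K. w (card S) * D S) = (\<Sum>S\<in>Pow K. w (Suc (card S)) * D (insert l' S))"
  proof (rule sum.reindex_cong)
    show "inj_on (insert l') (Pow K)"
      using K by (auto intro!: inj_onI)
  qed (use K in \<open>auto simp: card_insert_if finite_subset\<close>)
  finally have with_l': "link_shapley f g l
      = (\<Sum>S\<in>Pow K. w (card S) * D S + w (Suc (card S)) * D (insert l' S))"
    by (simp add: sum.distrib)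
  have without_l': "link_shapley f (g - {l'}) l = (\<Sum>S\<in>Pow K. (w (card S) + w (Suc (card S))) * D S)"
    unfolding link_shapley_def K(5)
  proof (rule sum.cong[OF refl])
    fix S assume "S \<in> Pow K"
    then have "card S + 2 \<le> card g"
      using K card_g card_mono by fastforce
    then show "shapley_weight (card (g - {l'})) (card S) * (f (insert l S) - f S)
        = (w (card S) + w (Suc (card S))) * D S"
      using l g shapley_weight_pascal[of "card S" "card g"] by (simp add: w_def D_def)
  qed
  show ?thesis
    unfolding with_l' without_l' K_def[symmetric] w_def[symmetric] D_def
    by (simp add: sum_subtractf[symmetric] algebra_simps)
qed

lemma link_shapley_balanced_contributions:
  assumes "finite g" "l \<in> g" "l' \<in> g"
  shows "link_shapley f g l - link_shapley f (g - {l'}) l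
       = link_shapley f g l' - link_shapley f (g - {l}) l'"
proof (cases "l = l'")
  case False
  then show ?thesis
    unfolding link_shapley_remove_other_link[OF assms False]
      link_shapley_remove_other_link[OF assms(1,3,2) False[symmetric]]
    by (simp add: insert_commute algebra_simps)
qed simp

lemma position_value_remove_link:
  assumes "finite g"
  shows "position_value v g i - position_value v (g - {l'}) i
       = 1/2 * (\<Sum>l\<in>links_of g i. link_shapley v g l - (if l = l' then 0 else link_shapley v (g - {l'}) l))"
proof -
  have "links_of (g - {l'}) i = {l \<in> links_of g i. l \<noteq> l'}"
    unfolding links_of_def by auto
  moreover have "finite (links_of g i)"
    using assms by (simp add: links_of_def)
  ultimately have "(\<Sum>l\<in>links_of (g - {l'}) i. link_shapley v (g - {l'}) l)
      = (\<Sum>l\<in>links_of g i. if l = l' then 0 else link_shapley v (g - {l'}) l)"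
    by (simp add: sum.inter_filter) (rule sum.cong; simp)
  then show ?thesis
    unfolding position_value_eq_link_shapley by (simp add: sum_subtractf right_diff_distrib)
qed

lemma position_value_balanced_link_contributions:
  assumes g: "finite g"
  shows "(\<Sum>l'\<in>links_of g j. position_value v g i - position_value v (g - {l'}) i)
       = (\<Sum>l'\<in>links_of g i. position_value v g j - position_value v (g - {l'}) j)"
proof -
  define D where "D l l' = link_shapley v g l - (if l = l' then 0 else link_shapley v (g - {l'}) l)"
    for l l'
  have D_sym: "D l l' = D l' l" if "l \<in> g" "l' \<in> g" for l l'
    using link_shapley_balanced_contributions[OF g that, of v] by (simp add: D_def)
  have "(\<Sum>l'\<in>links_of g j. position_value v g i - position_value v (g - {l'}) i)
      = 1/2 * (\<Sum>l'\<in>links_of g j. \<Sum>l\<in>links_of g i. D l l')"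
    unfolding position_value_remove_link[OF g] D_def by (simp add: sum_distrib_left)
  also have "\<dots> = 1/2 * (\<Sum>l\<in>links_of g i. \<Sum>l'\<in>links_of g j. D l' l)"
    using D_sym by (subst sum.swap) (auto simp: links_of_def intro!: sum.cong)
  also have "\<dots> = (\<Sum>l'\<in>links_of g i. position_value v g j - position_value v (g - {l'}) j)"
    unfolding position_value_remove_link[OF g] D_def by (simp add: sum_distrib_left)
  finally show ?thesis .
qed

lemma mem_players_iff: "x \<in> players g \<longleftrightarrow> (\<exists>y. y \<noteq> x \<and> {x, y} \<in> g)"
  unfolding players_def nbrs_def by (auto simp: insert_commute)

lemma link_in_players:
  assumes "{x, y} \<in> g" "x \<noteq> y"
  shows "x \<in> players g" "y \<in> players g"
  using assms by (auto simp: mem_players_iff insert_commute)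

lemma players_mono: "g \<subseteq> g' \<Longrightarrow> players g \<subseteq> players g'"
  unfolding subset_iff mem_players_iff by blast

lemma mem_networks_iff: "g \<in> networks \<longleftrightarrow> g \<subseteq> complete_net"
  unfolding networks_def by auto

lemma network_link_cases:
  assumes "l \<in> g" "g \<subseteq> complete_net"
  obtains a b where "a \<noteq> b" "l = {a, b}"
  using assms unfolding complete_net_def by blast

lemma singleton_notin_complete_net: "{x} \<notin> complete_net"
  unfolding complete_net_def by (auto simp: doubleton_eq_iff)

lemma link_notin_if_disjoint_players:
  assumes "players A \<inter> players B = {}" "x \<in> players A" "x \<noteq> y"
  shows "{x, y} \<notin> B"
  using assms link_in_players(1)[of x y B] by blast

lemma connected_subset_if_disjoint_players:
  assumes c: "c \<subseteq> A \<union> B" "c \<subseteq> complete_net" "net_connected c"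
    and AB: "players A \<inter> players B = {}"
    and x: "x \<in> players c" "x \<in> players A"
  shows "c \<subseteq> A"
proof
  fix l assume l: "l \<in> c"
  then obtain a b where ab: "a \<noteq> b" "l = {a, b}"
    using c(2) by (rule network_link_cases)
  have "a \<in> players c"
    using l ab link_in_players(1)[of a b c] by simp
  then have "(\<lambda>x y. {x, y} \<in> c)\<^sup>*\<^sup>* x a"
    using c(3) x(1) unfolding net_connected_def by blast
  then have "a \<in> players A"
  proof (induction rule: rtranclp_induct)
    case (step p q)
    have "p \<noteq> q"
      using step(2) c(2) singleton_notin_complete_net by fastforce
    have "{p, q} \<notin> B"
      using step(3) \<open>p \<noteq> q\<close> by (rule link_notin_if_disjoint_players[OF AB])
    then have "{p, q} \<in> A"
      using step(2) c(1) by blast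
    then show ?case
      using \<open>p \<noteq> q\<close> by (rule link_in_players(2))
  qed (use x in simp)
  then have "{a, b} \<notin> B"
    using ab(1) by (rule link_notin_if_disjoint_players[OF AB])
  then show "l \<in> A"
    using ab l c(1) by blast
qed

lemma in_components_UnI:
  assumes c: "c \<in> components A" and AB: "players A \<inter> players B = {}"
    and net: "A \<union> B \<subseteq> complete_net"
  shows "c \<in> components (A \<union> B)"
proof -
  have c_sub: "c \<subseteq> A" and maximal: "\<forall>i\<in>players c. \<forall>j. {i, j} \<in> A \<longrightarrow> {i, j} \<in> c"
    using c unfolding components_def by auto
  have "{i, j} \<in> c" if i: "i \<in> players c" and ij: "{i, j} \<in> A \<union> B" for i j
  proof -
    have "i \<noteq> j"
      using ij net singleton_notin_complete_net by fastforce
    then have "{i, j} \<notin> B"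
      using i players_mono[OF c_sub] link_notin_if_disjoint_players[OF AB] by blast
    then show ?thesis
      using ij i maximal by auto
  qed
  then show ?thesis
    using c unfolding components_def by auto
qed

lemma in_components_UnD:
  assumes c: "c \<in> components (A \<union> B)" and AB: "players A \<inter> players B = {}"
    and net: "A \<union> B \<subseteq> complete_net" and l: "l \<in> c" "l \<in> A"
  shows "c \<in> components A"
proof -
  have c_sub: "c \<subseteq> A \<union> B" "c \<subseteq> complete_net" and "net_connected c"
    using c net unfolding components_def by auto
  obtain a b where ab: "a \<noteq> b" "l = {a, b}"
    using l(1) c_sub(2) by (rule network_link_cases)
  then have "a \<in> players c" "a \<in> players A"
    using l link_in_players(1)[of a b] by auto
  then have "c \<subseteq> A"
    using connected_subset_if_disjoint_players[OF c_sub \<open>net_connected c\<close> AB] by blast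
  then show ?thesis
    using c unfolding components_def by auto
qed

lemma components_Un_disjoint_players:
  assumes AB: "players A \<inter> players B = {}" and net: "A \<union> B \<subseteq> complete_net"
  shows "components (A \<union> B) = components A \<union> components B"
proof
  have BA: "players B \<inter> players A = {}" "B \<union> A \<subseteq> complete_net"
    using AB net by auto
  show "components (A \<union> B) \<subseteq> components A \<union> components B"
  proof
    fix c assume c: "c \<in> components (A \<union> B)"
    then obtain l where l: "l \<in> c" "l \<in> A \<or> l \<in> B"
      unfolding components_def by blast
    have "c \<in> components (B \<union> A)"
      using c by (simp add: Un_commute)
    then show "c \<in> components A \<union> components B"
      using l in_components_UnD[OF c AB net]
        in_components_UnD[OF _ BA] by blast
  qed
  show "components A \<union> components B \<subseteq> components (A \<union> B)"
    using in_components_UnI[OF _ AB net]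
      in_components_UnI[OF _ BA] by (metis Un_commute Un_subset_iff subsetI)
qed

lemma disjoint_players_component_split:
  assumes h: "h \<in> components E" and S: "S \<subseteq> E"
  shows "players (S \<inter> h) \<inter> players (S - h) = {}"
proof -
  have maximal: "\<forall>i\<in>players h. \<forall>j. {i, j} \<in> E \<longrightarrow> {i, j} \<in> h"
    using h unfolding components_def by auto
  have False if x: "x \<in> players (S \<inter> h)" "x \<in> players (S - h)" for x
  proof -
    have "x \<in> players h"
      using x(1) players_mono[of "S \<inter> h" h] by auto
    moreover obtain y where "{x, y} \<in> S - h"
      using x(2) unfolding mem_players_iff by blast
    ultimately show False
      using maximal S by auto
  qed
  then show ?thesis by blast
qed

lemma comp_additive_component_split:
  fixes v :: "'a::finite game"
  assumes v: "comp_additive v" and h: "h \<in> components E"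
    and S: "S \<subseteq> E" and E: "E \<subseteq> complete_net"
  shows "v S = v (S \<inter> h) + v (S - h)"
proof -
  have components_S: "components S = components (S \<inter> h) \<union> components (S - h)"
    using components_Un_disjoint_players[OF disjoint_players_component_split[OF h S]] S E
    by (simp add: Int_Diff_Un)
  have "components (S \<inter> h) \<inter> components (S - h) = {}"
    unfolding components_def by auto
  moreover have "S \<in> networks" "S \<inter> h \<in> networks" "S - h \<in> networks"
    using S E by (auto simp: mem_networks_iff)
  ultimately show ?thesis
    using v unfolding comp_additive_def by (simp add: components_S sum.union_disjoint)
qed

definition link_component :: "'a network \<Rightarrow> 'a \<Rightarrow> 'a network" where
  "link_component E a = {l \<in> E. \<exists>x\<in>l. (\<lambda>x y. {x, y} \<in> E)\<^sup>*\<^sup>* a x}"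

lemma rtranclp_link_component:
  assumes "(\<lambda>x y. {x, y} \<in> E)\<^sup>*\<^sup>* a y"
  shows "(\<lambda>x y. {x, y} \<in> link_component E a)\<^sup>*\<^sup>* a y"
  using assms
proof (induction rule: rtranclp_induct)
  case (step p q)
  then have "{p, q} \<in> link_component E a"
    unfolding link_component_def by auto
  with step.IH show ?case
    by (simp add: rtranclp.rtrancl_into_rtrancl)
qed simp

lemma players_link_component_reachable:
  assumes "p \<in> players (link_component E a)"
  shows "(\<lambda>x y. {x, y} \<in> E)\<^sup>*\<^sup>* a p"
proof -
  obtain q where "{p, q} \<in> link_component E a"
    using assms unfolding mem_players_iff by blast
  then obtain x where "x \<in> {p, q}" "(\<lambda>x y. {x, y} \<in> E)\<^sup>*\<^sup>* a x" "{p, q} \<in> E"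
    unfolding link_component_def by auto
  then show ?thesis
    by (auto simp: insert_commute intro: rtranclp.rtrancl_into_rtrancl)
qed

lemma link_component_in_components:
  assumes "{a, b} \<in> E" "a \<noteq> b"
  shows "link_component E a \<in> components E" "a \<in> players (link_component E a)"
proof -
  let ?h = "link_component E a"
  have sym: "symp (\<lambda>x y. {x, y} \<in> ?h)\<^sup>*\<^sup>*"
    by (rule symp_rtranclp) (auto intro: sympI simp: insert_commute)
  show a: "a \<in> players ?h"
    using assms by (intro link_in_players(1)[of a b]) (auto simp: link_component_def)
  have "net_connected ?h"
    unfolding net_connected_def
  proof (intro ballI)
    fix i j assume i: "i \<in> players ?h" and j: "j \<in> players ?h"
    have ai: "(\<lambda>x y. {x, y} \<in> ?h)\<^sup>*\<^sup>* a i"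
      using i by (intro rtranclp_link_component players_link_component_reachable)
    have aj: "(\<lambda>x y. {x, y} \<in> ?h)\<^sup>*\<^sup>* a j"
      using j by (intro rtranclp_link_component players_link_component_reachable)
    show "(\<lambda>x y. {x, y} \<in> ?h)\<^sup>*\<^sup>* i j"
      using sympD[OF sym ai] aj by (rule rtranclp_trans)
  qed
  moreover have "{i, j} \<in> ?h" if "i \<in> players ?h" "{i, j} \<in> E" for i j
  proof -
    have "(\<lambda>x y. {x, y} \<in> E)\<^sup>*\<^sup>* a i"
      using that(1) by (rule players_link_component_reachable)
    with that(2) show ?thesis
      unfolding link_component_def by auto
  qed
  moreover have "?h \<noteq> {}" "?h \<subseteq> E"
    using a by (auto simp: link_component_def mem_players_iff)
  ultimately show "?h \<in> components E"
    unfolding components_def by blast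
qed

lemma pdists_nonneg: "\<rho> \<in> pdists \<Longrightarrow> 0 \<le> \<rho> g"
  unfolding pdists_def by auto

lemma pdists_eq_0_outside_support: "\<rho> \<in> pdists \<Longrightarrow> g \<notin> support \<rho> \<Longrightarrow> \<rho> g = 0"
  unfolding pdists_def support_def by (auto simp: not_less intro: order.antisym)

lemma subset_extent: "\<rho> \<in> pdists \<Longrightarrow> \<rho> g \<noteq> 0 \<Longrightarrow> g \<subseteq> extent \<rho>"
  using pdists_eq_0_outside_support unfolding extent_def by blast

lemma extent_subset_complete_net: "extent \<rho> \<subseteq> complete_net"
  unfolding extent_def support_def networks_def by auto

lemma remove_link_eq:
  assumes "l \<in> complete_net"
  shows "remove_link \<rho> l h = (if h \<subseteq> complete_net - {l} then \<rho> h + \<rho> (insert l h) else 0)"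
proof -
  have "Pow (complete_net - (complete_net - {l})) = {{}, {l}}"
    using assms by auto
  then show ?thesis
    unfolding remove_link_def restrict_dist_def by simp
qed

lemma sum_remove_link:
  fixes \<rho> :: "'a::finite pdist"
  assumes l: "l \<in> complete_net"
  shows "(\<Sum>h\<in>networks. remove_link \<rho> l h * F h) = (\<Sum>g\<in>networks. \<rho> g * F (g - {l}))"
proof -
  define N0 where "N0 = {h \<in> (networks :: 'a network set). l \<notin> h}"
  define N1 where "N1 = {h \<in> (networks :: 'a network set). l \<in> h}"
  have "(\<Sum>h\<in>networks. remove_link \<rho> l h * F h) = (\<Sum>h\<in>N0. (\<rho> h + \<rho> (insert l h)) * F h)"
    by (rule sum.mono_neutral_cong_right) (auto simp: remove_link_eq[OF l] N0_def mem_networks_iff)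
  also have "\<dots> = (\<Sum>g\<in>N0. \<rho> g * F (g - {l})) + (\<Sum>h\<in>N0. \<rho> (insert l h) * F h)"
    by (auto simp: sum.distrib distrib_right N0_def intro!: sum.cong)
  also have "(\<Sum>h\<in>N0. \<rho> (insert l h) * F h) = (\<Sum>g\<in>N1. \<rho> g * F (g - {l}))"
    by (rule sum.reindex_bij_witness[where i = "\<lambda>g. g - {l}" and j = "insert l"])
      (use l in \<open>auto simp: N0_def N1_def mem_networks_iff\<close>)
  also have "(\<Sum>g\<in>N0. \<rho> g * F (g - {l})) + \<dots> = (\<Sum>g\<in>N0 \<union> N1. \<rho> g * F (g - {l}))"
    by (rule sum.union_disjoint[symmetric]) (auto simp: N0_def N1_def)
  also have "N0 \<union> N1 = networks"
    unfolding N0_def N1_def by auto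
  finally show ?thesis .
qed

lemma remove_link_in_pdists:
  fixes \<rho> :: "'a::finite pdist"
  assumes \<rho>: "\<rho> \<in> pdists" and l: "l \<in> complete_net"
  shows "remove_link \<rho> l \<in> pdists"
proof -
  have "\<rho> h + \<rho> (insert l h) \<le> 1" if h: "h \<subseteq> complete_net - {l}" for h
  proof -
    have "insert l h \<noteq> h"
      using h by auto
    then have "\<rho> h + \<rho> (insert l h) = (\<Sum>g\<in>{h, insert l h}. \<rho> g)"
      by simp
    also have "\<dots> \<le> (\<Sum>g\<in>networks. \<rho> g)"
      by (rule sum_mono2) (use h l pdists_nonneg[OF \<rho>] in \<open>auto simp: mem_networks_iff\<close>)
    also have "\<dots> = 1"
      using \<rho> unfolding pdists_def by auto
    finally show ?thesis .
  qed
  moreover have "(\<Sum>h\<in>networks. remove_link \<rho> l h) = 1"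
    using sum_remove_link[OF l, of \<rho> "\<lambda>_. 1"] \<rho> unfolding pdists_def by simp
  ultimately show ?thesis
    unfolding pdists_def using pdists_nonneg[OF \<rho>]
    by (auto simp: remove_link_eq[OF l] mem_networks_iff add_nonneg_nonneg)
qed

lemma extent_remove_link:
  fixes \<rho> :: "'a::finite pdist"
  assumes \<rho>: "\<rho> \<in> pdists" and l: "l \<in> complete_net"
  shows "extent (remove_link \<rho> l) \<subseteq> extent \<rho> - {l}"
proof
  fix x assume "x \<in> extent (remove_link \<rho> l)"
  then obtain g where g: "remove_link \<rho> l g > 0" "x \<in> g"
    unfolding extent_def support_def by auto
  then have "g \<subseteq> complete_net - {l}" "\<rho> g \<noteq> 0 \<or> \<rho> (insert l g) \<noteq> 0"
    by (auto simp: remove_link_eq[OF l] split: if_splits)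
  then show "x \<in> extent \<rho> - {l}"
    using g subset_extent[OF \<rho>] by blast
qed

lemma expected_position_value_remove_link:
  fixes l :: "'a::finite set"
  assumes "l \<in> complete_net"
  shows "expected_position_value v (remove_link \<rho> l) i
       = (\<Sum>g\<in>networks. \<rho> g * position_value v (g - {l}) i)"
  unfolding expected_position_value_def by (rule sum_remove_link[OF assms])

lemma allocation_rule_expected_position_value:
  "allocation_rule (expected_position_value :: 'a::finite rule)"
  unfolding allocation_rule_def
proof (intro ballI)
  fix v :: "'a game" and \<rho> :: "'a pdist" and i
  assume \<rho>: "\<rho> \<in> pdists" and i: "i \<in> isolated (extent \<rho>)"
  have "links_of g i = {}" if "\<rho> g \<noteq> 0" for g
  proof -
    have "l \<notin> g" if "i \<in> l" for l
    proof
      assume "l \<in> g"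
      moreover have "g \<subseteq> extent \<rho>"
        using \<rho> \<open>\<rho> g \<noteq> 0\<close> by (rule subset_extent)
      ultimately have l: "l \<in> extent \<rho>"
        by blast
      then obtain a b where "a \<noteq> b" "l = {a, b}"
        using extent_subset_complete_net by (rule network_link_cases)
      then have "a \<in> players (extent \<rho>)" "b \<in> players (extent \<rho>)"
        using l link_in_players[of a b "extent \<rho>"] by auto
      then show False
        using i \<open>i \<in> l\<close> \<open>l = {a, b}\<close> by (auto simp: isolated_def)
    qed
    then show ?thesis
      unfolding links_of_def by blast
  qed
  then have "\<rho> g * position_value v g i = 0" for g
    by (cases "\<rho> g = 0") (simp_all add: position_value_eq_link_shapley)
  then show "expected_position_value v \<rho> i = 0"
    unfolding expected_position_value_def by (intro sum.neutral) blast
qed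

lemma card_component_players_in_link:
  assumes h: "h \<in> components E" and E: "E \<subseteq> complete_net" and l: "l \<in> E"
  shows "card {i \<in> players h. i \<in> l} = (if l \<in> h then 2 else 0)"
proof -
  have maximal: "{i, j} \<in> h" if "i \<in> players h" "{i, j} \<in> E" for i j
    using h that unfolding components_def by auto
  obtain a b where ab: "a \<noteq> b" "l = {a, b}"
    using l E by (rule network_link_cases)
  show ?thesis
  proof (cases "l \<in> h")
    case True
    then have "{i \<in> players h. i \<in> l} = {a, b}"
      using ab link_in_players[of a b h] by auto
    then show ?thesis
      using True ab by simp
  next
    case False
    then have "a \<notin> players h" "b \<notin> players h"
      using maximal[of a b] maximal[of b a] l ab by (auto simp: insert_commute)
    then have "{i \<in> players h. i \<in> l} = {}"
      using ab by auto
    with False show ?thesis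
      by (metis card.empty)
  qed
qed

lemma sum_position_value_component:
  fixes g :: "'a::finite network"
  assumes h: "h \<in> components E" and E: "E \<subseteq> complete_net" and g: "g \<subseteq> E"
  shows "(\<Sum>i\<in>players h. position_value v g i) = (\<Sum>l\<in>g \<inter> h. link_shapley v g l)"
proof -
  have "(\<Sum>i\<in>players h. \<Sum>l\<in>links_of g i. link_shapley v g l)
      = (\<Sum>l\<in>g. \<Sum>i\<in>{i \<in> players h. i \<in> l}. link_shapley v g l)"
    unfolding links_of_def by (rule sum.swap_restrict) auto
  also have "\<dots> = (\<Sum>l\<in>g. 2 * (if l \<in> h then link_shapley v g l else 0))"
  proof (rule sum.cong[OF refl])
    fix l assume "l \<in> g"
    then show "(\<Sum>i\<in>{i \<in> players h. i \<in> l}. link_shapley v g l)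
        = 2 * (if l \<in> h then link_shapley v g l else 0)"
      using card_component_players_in_link[OF h E, of l] g by auto
  qed
  also have "\<dots> = 2 * (\<Sum>l\<in>g \<inter> h. link_shapley v g l)"
    by (simp add: sum_distrib_left sum.inter_restrict)
  finally show ?thesis
    unfolding position_value_eq_link_shapley by (simp flip: sum_divide_distrib)
qed

lemma sum_link_shapley_component:
  fixes v :: "'a::finite game"
  assumes v: "comp_additive v" "v {} = 0" and h: "h \<in> components E"
    and E: "E \<subseteq> complete_net" and g: "g \<subseteq> E"
  shows "(\<Sum>l\<in>g \<inter> h. link_shapley v g l) = v (g \<inter> h)"
proof -
  \<comment> \<open>On subnetworks of g, v = v_in + v_out; the links of h are null players of v_out,
    all other links are null players of v_in.\<close>
  define v_in where "v_in S = v (S \<inter> h)" for S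
  define v_out where "v_out S = v (S - h)" for S
  have v_split: "v S = v_in S + v_out S" if "S \<subseteq> g" for S
  proof -
    have "S \<subseteq> E"
      using that g by blast
    then show ?thesis
      unfolding v_in_def v_out_def by (rule comp_additive_component_split[OF v(1) h _ E])
  qed
  have "link_shapley v g l = link_shapley v_in g l" if "l \<in> g \<inter> h" for l
  proof -
    have "link_shapley v g l = link_shapley v_in g l + link_shapley v_out g l"
      using that v_split link_shapley_cong[of l g v "\<lambda>S. v_in S + v_out S"]
      by (simp add: link_shapley_add)
    moreover have "link_shapley v_out g l = 0"
      using that by (intro link_shapley_null_player) (simp add: v_out_def)
    ultimately show ?thesis
      by simp
  qed
  then have "(\<Sum>l\<in>g \<inter> h. link_shapley v g l) = (\<Sum>l\<in>g \<inter> h. link_shapley v_in g l)"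
    by (rule sum.cong[OF refl])
  also have "\<dots> = (\<Sum>l\<in>g. link_shapley v_in g l)"
  proof (rule sum.mono_neutral_left)
    show "\<forall>l\<in>g - g \<inter> h. link_shapley v_in g l = 0"
      by (auto intro: link_shapley_null_player simp: v_in_def)
  qed auto
  also have "\<dots> = v (g \<inter> h)"
    using v(2) by (simp add: link_shapley_efficient v_in_def)
  finally show ?thesis .
qed

lemma component_balanced_expected_position_value:
  fixes v :: "'a::finite game"
  assumes v: "v \<in> games" "comp_additive v" and \<rho>: "\<rho> \<in> pdists"
  shows "component_balanced expected_position_value v \<rho>"
  unfolding component_balanced_def
proof
  fix h assume h: "h \<in> components (extent \<rho>)"
  have "(\<Sum>i\<in>players h. expected_position_value v \<rho> i)
      = (\<Sum>g\<in>networks. \<rho> g * (\<Sum>i\<in>players h. position_value v g i))"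
    unfolding expected_position_value_def by (subst sum.swap) (simp add: sum_distrib_left)
  also have "\<dots> = (\<Sum>g\<in>support \<rho>. \<rho> g * v (g \<inter> h))"
  proof (rule sum.mono_neutral_cong_right)
    fix g assume "g \<in> support \<rho>"
    then have "g \<subseteq> extent \<rho>"
      unfolding extent_def by auto
    then have "(\<Sum>i\<in>players h. position_value v g i) = v (g \<inter> h)"
      using sum_position_value_component[OF h extent_subset_complete_net]
        sum_link_shapley_component[OF v(2) _ h extent_subset_complete_net] v(1)
      by (simp add: games_def)
    then show "\<rho> g * (\<Sum>i\<in>players h. position_value v g i) = \<rho> g * v (g \<inter> h)"
      by simp
  next
    show "\<forall>g\<in>networks - support \<rho>. \<rho> g * (\<Sum>i\<in>players h. position_value v g i) = 0"
      using pdists_eq_0_outside_support[OF \<rho>] by simp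
  qed (auto simp: support_def)
  finally show "(\<Sum>i\<in>players h. expected_position_value v \<rho> i) = (\<Sum>g\<in>support \<rho>. \<rho> g * v (g \<inter> h))" .
qed

lemma sum_expected_position_value_link_contributions:
  fixes \<rho> :: "'a::finite pdist"
  assumes \<rho>: "\<rho> \<in> pdists"
  shows "(\<Sum>l\<in>links_of (extent \<rho>) j.
            expected_position_value v \<rho> i - expected_position_value v (remove_link \<rho> l) i)
       = (\<Sum>g\<in>networks. \<rho> g *
            (\<Sum>l\<in>links_of g j. position_value v g i - position_value v (g - {l}) i))"
proof -
  let ?c = "\<lambda>g l. position_value v g i - position_value v (g - {l}) i"
  have "expected_position_value v \<rho> i - expected_position_value v (remove_link \<rho> l) i
      = (\<Sum>g\<in>networks. \<rho> g * ?c g l)" if "l \<in> links_of (extent \<rho>) j" for l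
  proof -
    have "l \<in> complete_net"
      using that extent_subset_complete_net unfolding links_of_def by blast
    then show ?thesis
      unfolding expected_position_value_remove_link[OF \<open>l \<in> complete_net\<close>]
      by (simp add: expected_position_value_def sum_subtractf right_diff_distrib)
  qed
  then have "(\<Sum>l\<in>links_of (extent \<rho>) j.
            expected_position_value v \<rho> i - expected_position_value v (remove_link \<rho> l) i)
      = (\<Sum>g\<in>networks. \<rho> g * (\<Sum>l\<in>links_of (extent \<rho>) j. ?c g l))"
    by (simp add: sum.swap[of _ networks] sum_distrib_left)
  also have "\<dots> = (\<Sum>g\<in>networks. \<rho> g * (\<Sum>l\<in>links_of g j. ?c g l))"
  proof (rule sum.cong[OF refl])
    fix g :: "'a network"
    show "\<rho> g * (\<Sum>l\<in>links_of (extent \<rho>) j. ?c g l) = \<rho> g * (\<Sum>l\<in>links_of g j. ?c g l)"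
    proof (cases "\<rho> g = 0")
      case False
      then have "links_of g j \<subseteq> links_of (extent \<rho>) j"
        using subset_extent[OF \<rho>] unfolding links_of_def by blast
      moreover have "?c g l = 0" if "l \<notin> g" for l
        using that by simp
      ultimately show ?thesis
        by (subst sum.mono_neutral_right[of "links_of (extent \<rho>) j"]) (auto simp: links_of_def)
    qed simp
  qed
  finally show ?thesis .
qed

lemma balanced_link_contributions_expected_position_value:
  fixes \<rho> :: "'a::finite pdist"
  assumes "\<rho> \<in> pdists"
  shows "balanced_link_contributions expected_position_value v \<rho>"
  unfolding balanced_link_contributions_def sum_expected_position_value_link_contributions[OF assms]
proof (intro allI impI sum.cong refl)
  fix i j and g :: "'a network"
  show "\<rho> g * (\<Sum>l\<in>links_of g j. position_value v g i - position_value v (g - {l}) i)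
      = \<rho> g * (\<Sum>l\<in>links_of g i. position_value v g j - position_value v (g - {l}) j)"
    by (simp only: position_value_balanced_link_contributions[OF finite])
qed

lemma cross_proportional_eq_0:
  fixes w d :: "'b \<Rightarrow> real"
  assumes P: "finite P" "a \<in> P" and w: "\<forall>k\<in>P. 0 \<le> w k" "0 < w a"
    and cross: "\<And>i j. w j * d i = w i * d j" and sum_d: "sum d P = 0"
  shows "d i = 0"
proof -
  have "d a * sum w P = (\<Sum>k\<in>P. w k * d a)"
    by (simp add: sum_distrib_left mult.commute)
  also have "\<dots> = w a * sum d P"
    by (simp add: sum_distrib_left cross)
  also have "\<dots> = 0"
    using sum_d by simp
  finally have "d a * sum w P = 0" .
  moreover have "0 < sum w P"
    using P w by (intro sum_pos2) auto
  ultimately have "d a = 0"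
    by simp
  then have "w a * d i = 0"
    using cross[of i a] by simp
  then show ?thesis
    using w(2) by simp
qed

lemma balanced_link_contributions_cross_proportional:
  fixes \<Psi> \<Phi> :: "'a rule"
  assumes "balanced_link_contributions \<Psi> v \<rho>" "balanced_link_contributions \<Phi> v \<rho>"
    and agree: "\<And>l. l \<in> extent \<rho> \<Longrightarrow> \<Psi> v (remove_link \<rho> l) = \<Phi> v (remove_link \<rho> l)"
  shows "real (card (links_of (extent \<rho>) j)) * (\<Psi> v \<rho> i - \<Phi> v \<rho> i)
       = real (card (links_of (extent \<rho>) i)) * (\<Psi> v \<rho> j - \<Phi> v \<rho> j)"
proof -
  have contributions_diff: "(\<Sum>l\<in>links_of (extent \<rho>) j. \<Psi> v \<rho> i - \<Psi> v (remove_link \<rho> l) i)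
      - (\<Sum>l\<in>links_of (extent \<rho>) j. \<Phi> v \<rho> i - \<Phi> v (remove_link \<rho> l) i)
      = real (card (links_of (extent \<rho>) j)) * (\<Psi> v \<rho> i - \<Phi> v \<rho> i)" for i j
  proof -
    have "(\<Sum>l\<in>links_of (extent \<rho>) j. \<Psi> v \<rho> i - \<Psi> v (remove_link \<rho> l) i)
        - (\<Sum>l\<in>links_of (extent \<rho>) j. \<Phi> v \<rho> i - \<Phi> v (remove_link \<rho> l) i)
        = (\<Sum>l\<in>links_of (extent \<rho>) j. (\<Psi> v \<rho> i - \<Psi> v (remove_link \<rho> l) i)
            - (\<Phi> v \<rho> i - \<Phi> v (remove_link \<rho> l) i))"
      by (rule sum_subtractf[symmetric])
    also have "\<dots> = (\<Sum>l\<in>links_of (extent \<rho>) j. \<Psi> v \<rho> i - \<Phi> v \<rho> i)"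
      by (rule sum.cong) (auto simp: links_of_def agree)
    finally show ?thesis
      by simp
  qed
  show ?thesis
  proof (cases "i = j")
    case False
    then show ?thesis
      using assms(1,2) contributions_diff[of j i] contributions_diff[of i j]
      unfolding balanced_link_contributions_def by metis
  qed simp
qed

lemma eq_expected_position_value_if_eq_on_remove_link:
  fixes \<Psi> :: "'a::finite rule"
  assumes alloc: "allocation_rule \<Psi>"
    and CB: "component_balanced \<Psi> v \<rho>" and BLC: "balanced_link_contributions \<Psi> v \<rho>"
    and v: "v \<in> games" "comp_additive v" and \<rho>: "\<rho> \<in> pdists"
    and agree: "\<And>l. l \<in> extent \<rho> \<Longrightarrow>
      \<Psi> v (remove_link \<rho> l) = expected_position_value v (remove_link \<rho> l)"
  shows "\<Psi> v \<rho> = expected_position_value v \<rho>"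
proof -
  let ?E = "extent \<rho>"
  define d where "d i = \<Psi> v \<rho> i - expected_position_value v \<rho> i" for i
  have cross: "real (card (links_of ?E j)) * d i = real (card (links_of ?E i)) * d j" for i j
    unfolding d_def
    by (rule balanced_link_contributions_cross_proportional[OF BLC
          balanced_link_contributions_expected_position_value[OF \<rho>] agree])
  have "d i = 0" for i
  proof (cases "i \<in> isolated ?E")
    case True
    then have "\<Psi> v \<rho> i = 0" "expected_position_value v \<rho> i = 0"
      using alloc allocation_rule_expected_position_value v(1) \<rho>
      unfolding allocation_rule_def by blast+
    then show ?thesis
      by (simp add: d_def)
  next
    case False
    then obtain k where k: "{i, k} \<in> ?E" "i \<noteq> k"
      by (auto simp: isolated_def mem_players_iff)
    define h where "h = link_component ?E i"
    have h: "h \<in> components ?E" "i \<in> players h"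
      unfolding h_def using k by (rule link_component_in_components)+
    have sum_d: "sum d (players h) = 0"
      using CB component_balanced_expected_position_value[OF v \<rho>] h(1)
      unfolding component_balanced_def d_def by (simp add: sum_subtractf)
    have "{i, k} \<in> links_of ?E i"
      using k by (simp add: links_of_def)
    then have "0 < real (card (links_of ?E i))"
      by (auto simp: card_gt_0_iff)
    then show ?thesis
      using cross_proportional_eq_0[OF finite h(2) _ _ cross sum_d] by simp
  qed
  then show ?thesis
    unfolding d_def by auto
qed

lemma expected_position_value_unique:
  fixes \<Psi> :: "'a::finite rule"
  assumes alloc: "allocation_rule \<Psi>"
    and properties: "\<forall>(v, \<rho>)\<in>D_class. component_balanced \<Psi> v \<rho> \<and> balanced_link_contributions \<Psi> v \<rho>"
    and v: "v \<in> games" "comp_additive v" and \<rho>: "\<rho> \<in> pdists"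
  shows "\<Psi> v \<rho> = expected_position_value v \<rho>"
  using \<rho>
proof (induction "card (extent \<rho>)" arbitrary: \<rho> rule: less_induct)
  case less
  have "(v, \<rho>) \<in> D_class"
    using v less.prems by (simp add: D_class_def)
  then have "component_balanced \<Psi> v \<rho>" "balanced_link_contributions \<Psi> v \<rho>"
    using properties by auto
  moreover have "\<Psi> v (remove_link \<rho> l) = expected_position_value v (remove_link \<rho> l)"
    if "l \<in> extent \<rho>" for l
  proof -
    have l: "l \<in> complete_net"
      using that extent_subset_complete_net by blast
    have "extent (remove_link \<rho> l) \<subset> extent \<rho>"
      using extent_remove_link[OF less.prems l] that by blast
    then have "card (extent (remove_link \<rho> l)) < card (extent \<rho>)"
      by (simp add: psubset_card_mono)
    then show ?thesis
      using less.hyps remove_link_in_pdists[OF less.prems l] by blast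
  qed
  ultimately show ?case
    using eq_expected_position_value_if_eq_on_remove_link[OF alloc _ _ v less.prems] by blast
qed

theorem mainTheorem3:
  fixes dummy :: "'a::finite itself"
  shows "(allocation_rule (expected_position_value :: 'a rule) \<and>
          (\<forall>(v, \<rho>)\<in>(D_class :: ('a game \<times> 'a pdist) set).
             component_balanced expected_position_value v \<rho> \<and>
             balanced_link_contributions expected_position_value v \<rho>)) \<and>
         (\<forall>\<Psi> :: 'a rule. allocation_rule \<Psi> \<and>
             (\<forall>(v, \<rho>)\<in>D_class. component_balanced \<Psi> v \<rho> \<and> balanced_link_contributions \<Psi> v \<rho>)
           \<longrightarrow> (\<forall>(v, \<rho>)\<in>D_class. \<Psi> v \<rho> = expected_position_value v \<rho>))"
proof (intro conjI allI impI)
  show "allocation_rule (expected_position_value :: 'a rule)"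
    by (rule allocation_rule_expected_position_value)
  show "\<forall>(v, \<rho>)\<in>(D_class :: ('a game \<times> 'a pdist) set).
          component_balanced expected_position_value v \<rho> \<and>
          balanced_link_contributions expected_position_value v \<rho>"
    by (auto simp: D_class_def component_balanced_expected_position_value
        balanced_link_contributions_expected_position_value)
  fix \<Psi> :: "'a rule"
  assume "allocation_rule \<Psi> \<and>
    (\<forall>(v, \<rho>)\<in>D_class. component_balanced \<Psi> v \<rho> \<and> balanced_link_contributions \<Psi> v \<rho>)"
  then have alloc: "allocation_rule \<Psi>"
    and properties: "\<forall>(v, \<rho>)\<in>D_class. component_balanced \<Psi> v \<rho> \<and> balanced_link_contributions \<Psi> v \<rho>"
    by blast+
  show "\<forall>(v, \<rho>)\<in>D_class. \<Psi> v \<rho> = expected_position_value v \<rho>"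
  proof clarify
    fix v \<rho> assume "(v, \<rho>) \<in> (D_class :: ('a game \<times> 'a pdist) set)"
    then have "v \<in> games" "comp_additive v" "\<rho> \<in> pdists"
      by (simp_all add: D_class_def)
    then show "\<Psi> v \<rho> = expected_position_value v \<rho>"
      by (rule expected_position_value_unique[OF alloc properties])
  qed
qed

end
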